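(* Let $\gamma:[0,1]\to\mathbb{C}$ be a Jordan arc (continuous and injective) and $t_0\in(0,1)$. Assume that for every open interval $I\subset(0,1)$ with $t_0\in I$ and every function $f:I\to\mathbb{C}$ the following two conditions are equivalent: (1) there are a power series $\sum_{n\ge0}a_n(t-t_0)^n$ with radius of convergence $r>0$ and $0<\delta\le r$ such that $f(t)=\sum_{n\ge0}a_n(t-t_0)^n$ for $t\in(t_0-\delta,t_0+\delta)$; (2) there are a power series $\sum_{n\ge0}b_n(z-\gamma(t_0))^n$ with radius of convergence $s>0$ and $0<\epsilon\le s$ such that $f(t)=\sum_{n\ge0}b_n(\gamma(t)-\gamma(t_0))^n$ for $t\in(t_0-\epsilon,t_0+\epsilon)$. Then $\gamma$ is locally analytic at $t_0$: there exist $\delta>0$ with $(t_0-\delta,t_0+\delta)\subset[0,1]$, an open set $V\subset\mathbb{C}$ containing $(t_0-\delta,t_0+\delta)$, and an injective holomorphic (conformal) map $\phi:V\to\mathbb{C}$ with $\phi=\gamma$ on $(t_0-\delta,t_0+\delta)$. *)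

theory Defs
  imports "HOL-Analysis.Analysis"
begin

end

theory Submission
  imports Defs "HOL-Complex_Analysis.Complex_Analysis"
begin

text \<open>
  Only two instances of the hypothesis are needed. With \<open>f = \<gamma>\<close>, condition (2) holds
  trivially, so \<open>\<gamma>\<close> is given near \<open>t0\<close> by a convergent power series in \<open>t - t0\<close>;
  this series is a holomorphic extension \<open>\<phi>\<close> of \<open>\<gamma>\<close> to a disc. With \<open>f t = t - t0\<close>,
  condition (1) holds trivially, so \<open>t - t0 = g (\<gamma> t)\<close> for a function \<open>g\<close> holomorphic
  near \<open>\<gamma> t0\<close>. Then \<open>g \<circ> \<phi>\<close> agrees with \<open>z - t0\<close> on a real interval, hence on a
  whole disc by the identity theorem, and so \<open>\<phi>\<close> is injective there.
\<close>

definition affine_coeffs :: "'a::zero \<Rightarrow> 'a \<Rightarrow> nat \<Rightarrow> 'a" where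
  "affine_coeffs a b n = (if n = 0 then a else if n = 1 then b else 0)"

lemma summable_affine_coeffs:
  fixes z :: "'a::real_normed_field"
  shows "summable (\<lambda>n. affine_coeffs a b n * z ^ n)"
  by (rule summable_finite[of "{0,1}"]) (auto simp: affine_coeffs_def)

lemma suminf_affine_coeffs:
  fixes z :: "'a::real_normed_field"
  shows "(\<Sum>n. affine_coeffs a b n * z ^ n) = a + b * z"
proof -
  have "(\<Sum>n. affine_coeffs a b n * z ^ n) = (\<Sum>n\<in>{0,1}. affine_coeffs a b n * z ^ n)"
    by (rule suminf_finite) (auto simp: affine_coeffs_def)
  then show ?thesis by (simp add: affine_coeffs_def)
qed

lemma conv_radius_affine_coeffs:
  fixes a b :: "'a::{real_normed_field, banach}"
  shows "conv_radius (affine_coeffs a b) = \<infinity>"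
  by (rule conv_radius_inftyI'') (rule summable_affine_coeffs)

lemma holomorphic_on_power_series:
  fixes c :: "nat \<Rightarrow> complex"
  assumes "ereal r \<le> conv_radius c"
  shows "(\<lambda>z. \<Sum>n. c n * (z - z0) ^ n) holomorphic_on ball z0 r"
proof -
  have series: "eval_fps (Abs_fps c) holomorphic_on ball 0 r"
    by (rule holomorphic_on_eval_fps) (use assms in \<open>auto simp: fps_conv_radius_def intro!: ball_eball_mono\<close>)
  have "(\<lambda>z. z - z0) ` ball z0 r \<subseteq> ball 0 r"
    by (auto simp: dist_norm norm_minus_commute)
  then have "(eval_fps (Abs_fps c) \<circ> (\<lambda>z. z - z0)) holomorphic_on ball z0 r"
    by (intro holomorphic_on_compose_gen[OF _ series] holomorphic_intros)
  then show ?thesis by (simp add: o_def eval_fps_def)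
qed

lemma inj_on_ball_if_left_inverse_on_real_interval:
  fixes \<phi> g :: "complex \<Rightarrow> complex" and t0 r :: real
  assumes \<phi>: "\<phi> holomorphic_on ball (of_real t0) r"
    and g: "g holomorphic_on B" and maps: "\<phi> ` ball (of_real t0) r \<subseteq> B"
    and r: "r > 0"
    and inverse: "\<And>t. t \<in> {t0 - r<..<t0 + r} \<Longrightarrow> g (\<phi> (of_real t)) = of_real t"
  shows "inj_on \<phi> (ball (of_real t0) r)"
proof -
  let ?S = "ball (complex_of_real t0) r" and ?U = "complex_of_real ` {t0<..<t0 + r}"
  have "g (\<phi> z) - z = 0" if "z \<in> ?S" for z
  proof (rule analytic_continuation[where f = "\<lambda>z. g (\<phi> z) - z" and S = ?S and U = ?U and \<xi> = "of_real t0"])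
    show "(\<lambda>z. g (\<phi> z) - z) holomorphic_on ?S"
      by (intro holomorphic_intros holomorphic_on_compose_gen[OF \<phi> g maps, unfolded o_def])
    show "?U \<subseteq> ?S"
      by (auto simp: dist_norm simp flip: of_real_diff)
    show "of_real t0 islimpt ?U"
      by (rule islimpt_isCont_image) (use r in \<open>auto simp: islimpt_greaterThanLessThan1 eventually_at_filter\<close>)
    show "g (\<phi> z) - z = 0" if "z \<in> ?U" for z
      using that inverse by auto
  qed (use r that in auto)
  then show ?thesis
    by (metis inj_onI eq_iff_diff_eq_0)
qed

lemma holomorphic_maps_small_ball_into_ball:
  assumes "f holomorphic_on ball z0 r" "0 < r" "0 < \<epsilon>"
  obtains \<rho> where "0 < \<rho>" "\<rho> \<le> r" "f ` ball z0 \<rho> \<subseteq> ball (f z0) \<epsilon>"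
proof -
  have "isCont f z0"
    using assms(1,2)
    by (metis centre_in_ball continuous_on_interior holomorphic_on_imp_continuous_on interior_ball)
  then obtain \<rho> where "0 < \<rho>" "f ` ball z0 \<rho> \<subseteq> ball (f z0) \<epsilon>"
    using assms(3) continuous_at_ball by metis
  with assms(2) show thesis
    by (intro that[of "min \<rho> r"]) force+
qed

lemma conformal_extension_if_inverse_series:
  fixes c d :: "nat \<Rightarrow> complex" and \<gamma> :: "real \<Rightarrow> complex" and \<phi> :: "complex \<Rightarrow> complex"
  assumes t0: "t0 \<in> {a<..<b}"
    and \<delta>: "0 < \<delta>" "ereal \<delta> \<le> conv_radius c"
    and \<gamma>_series: "\<forall>t\<in>{a<..<b}. \<bar>t - t0\<bar> < \<delta> \<longrightarrow> \<gamma> t = (\<Sum>n. c n * complex_of_real (t - t0) ^ n)"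
    and \<epsilon>: "0 < \<epsilon>" "ereal \<epsilon> \<le> conv_radius d"
    and inverse_series: "\<forall>t\<in>{a<..<b}. \<bar>t - t0\<bar> < \<epsilon> \<longrightarrow> of_real (t - t0) = (\<Sum>n. d n * (\<gamma> t - \<gamma> t0) ^ n)"
    and \<phi>_def: "\<And>z. \<phi> z = (\<Sum>n. c n * (z - of_real t0) ^ n)"
  obtains \<rho> where "0 < \<rho>" "{t0 - \<rho><..<t0 + \<rho>} \<subseteq> {a<..<b}"
    "\<phi> holomorphic_on ball (of_real t0) \<rho>" "inj_on \<phi> (ball (of_real t0) \<rho>)"
    "\<forall>t\<in>{t0 - \<rho><..<t0 + \<rho>}. \<phi> (of_real t) = \<gamma> t"
proof -
  define g where "g w = of_real t0 + (\<Sum>n. d n * (w - \<gamma> t0) ^ n)" for w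
  let ?R = "min (min \<delta> \<epsilon>) (min (t0 - a) (b - t0))"
  have near_t0: "t \<in> {a<..<b}" "\<bar>t - t0\<bar> < \<delta>" "\<bar>t - t0\<bar> < \<epsilon>" if "\<bar>t - t0\<bar> < ?R" for t
    using that by auto
  have \<phi>_hol: "\<phi> holomorphic_on ball (of_real t0) ?R"
    unfolding \<phi>_def[abs_def] using \<delta>(2)
    by (intro holomorphic_on_power_series) (erule order_trans[rotated], simp add: min_le_iff_disj)
  have g_hol: "g holomorphic_on ball (\<gamma> t0) \<epsilon>"
    unfolding g_def by (intro holomorphic_intros holomorphic_on_power_series[OF \<epsilon>(2)])
  have \<phi>_extends_\<gamma>: "\<phi> (of_real t) = \<gamma> t" if "\<bar>t - t0\<bar> < ?R" for t
    using \<gamma>_series near_t0[OF that] by (simp add: \<phi>_def)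
  obtain \<rho> where \<rho>: "0 < \<rho>" "\<rho> \<le> ?R"
    and maps: "\<phi> ` ball (of_real t0) \<rho> \<subseteq> ball (\<gamma> t0) \<epsilon>"
    using holomorphic_maps_small_ball_into_ball[OF \<phi>_hol _ \<epsilon>(1)] \<phi>_extends_\<gamma>[of t0] \<delta>(1) \<epsilon>(1) t0
    by auto
  have \<phi>_hol_\<rho>: "\<phi> holomorphic_on ball (of_real t0) \<rho>"
    using \<rho>(2) by (intro holomorphic_on_subset[OF \<phi>_hol] subset_ball)
  have "inj_on \<phi> (ball (of_real t0) \<rho>)"
  proof (rule inj_on_ball_if_left_inverse_on_real_interval[OF \<phi>_hol_\<rho> g_hol maps \<rho>(1)])
    show "g (\<phi> (of_real t)) = of_real t" if "t \<in> {t0 - \<rho><..<t0 + \<rho>}" for t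
    proof -
      have t: "\<bar>t - t0\<bar> < ?R"
        using that \<rho> by auto
      have "\<phi> (of_real t) = \<gamma> t" "(\<Sum>n. d n * (\<gamma> t - \<gamma> t0) ^ n) = of_real (t - t0)"
        using \<phi>_extends_\<gamma>[OF t] inverse_series near_t0[OF t] by simp_all
      then show ?thesis
        by (simp add: g_def)
    qed
  qed
  moreover have "t \<in> {a<..<b}" "\<bar>t - t0\<bar> < ?R" if "t \<in> {t0 - \<rho><..<t0 + \<rho>}" for t
    using that \<rho> by auto
  ultimately show thesis
    using \<rho> \<phi>_hol_\<rho> \<phi>_extends_\<gamma> by (intro that[of \<rho>]) auto
qed

theorem lemma5p5:
  fixes \<gamma> :: "real \<Rightarrow> complex" and t0 :: real
  assumes jordan: "arc \<gamma>"
    and t0: "t0 \<in> {0<..<1}"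
    and equiv: "\<And>(I :: real set) (f :: real \<Rightarrow> complex).
       (\<exists>a b. I = {a<..<b}) \<Longrightarrow> I \<subseteq> {0<..<1} \<Longrightarrow> t0 \<in> I \<Longrightarrow>
       ((\<exists>(c :: nat \<Rightarrow> complex) \<delta>. conv_radius c > 0 \<and> 0 < \<delta> \<and> ereal \<delta> \<le> conv_radius c \<and>
            (\<forall>t\<in>I. \<bar>t - t0\<bar> < \<delta> \<longrightarrow> f t = (\<Sum>n. c n * (complex_of_real (t - t0)) ^ n)))
        \<longleftrightarrow>
        (\<exists>(d :: nat \<Rightarrow> complex) \<epsilon>. conv_radius d > 0 \<and> 0 < \<epsilon> \<and> ereal \<epsilon> \<le> conv_radius d \<and>
            (\<forall>t\<in>I. \<bar>t - t0\<bar> < \<epsilon> \<longrightarrow> f t = (\<Sum>n. d n * (\<gamma> t - \<gamma> t0) ^ n))))"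
  shows "\<exists>\<delta>>0. {t0 - \<delta><..<t0 + \<delta>} \<subseteq> {0..1} \<and>
           (\<exists>V (\<phi> :: complex \<Rightarrow> complex). open V \<and>
              complex_of_real ` {t0 - \<delta><..<t0 + \<delta>} \<subseteq> V \<and>
              \<phi> holomorphic_on V \<and> inj_on \<phi> V \<and>
              (\<forall>t\<in>{t0 - \<delta><..<t0 + \<delta>}. \<phi> (complex_of_real t) = \<gamma> t))"
proof -
  let ?I = "{0<..<1::real}"
  have I: "\<exists>a b. ?I = {a<..<b}" "?I \<subseteq> {0<..<1}" "t0 \<in> ?I"
    using t0 by auto
  have "\<exists>(d :: nat \<Rightarrow> complex) \<epsilon>. conv_radius d > 0 \<and> 0 < \<epsilon> \<and> ereal \<epsilon> \<le> conv_radius d \<and>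
          (\<forall>t\<in>?I. \<bar>t - t0\<bar> < \<epsilon> \<longrightarrow> \<gamma> t = (\<Sum>n. d n * (\<gamma> t - \<gamma> t0) ^ n))"
    by (intro exI[of _ "affine_coeffs (\<gamma> t0) 1"] exI[of _ 1])
       (simp add: conv_radius_affine_coeffs suminf_affine_coeffs)
  with equiv[OF I, of \<gamma>] obtain c \<delta> where c: "0 < \<delta>" "ereal \<delta> \<le> conv_radius c"
    and \<gamma>_series: "\<forall>t\<in>?I. \<bar>t - t0\<bar> < \<delta> \<longrightarrow> \<gamma> t = (\<Sum>n. c n * complex_of_real (t - t0) ^ n)"
    by blast
  have "\<exists>(c :: nat \<Rightarrow> complex) \<delta>. conv_radius c > 0 \<and> 0 < \<delta> \<and> ereal \<delta> \<le> conv_radius c \<and>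
          (\<forall>t\<in>?I. \<bar>t - t0\<bar> < \<delta> \<longrightarrow> of_real (t - t0) = (\<Sum>n. c n * complex_of_real (t - t0) ^ n))"
    by (intro exI[of _ "affine_coeffs 0 1"] exI[of _ 1])
       (simp add: conv_radius_affine_coeffs suminf_affine_coeffs)
  with equiv[OF I, of "\<lambda>t. of_real (t - t0)"] obtain d \<epsilon> where d: "0 < \<epsilon>" "ereal \<epsilon> \<le> conv_radius d"
    and inverse_series: "\<forall>t\<in>?I. \<bar>t - t0\<bar> < \<epsilon> \<longrightarrow> of_real (t - t0) = (\<Sum>n. d n * (\<gamma> t - \<gamma> t0) ^ n)"
    by blast
  define \<phi> where "\<phi> z = (\<Sum>n. c n * (z - complex_of_real t0) ^ n)" for z
  obtain \<rho> where \<rho>: "0 < \<rho>" "{t0 - \<rho><..<t0 + \<rho>} \<subseteq> ?I"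
    and \<phi>: "\<phi> holomorphic_on ball (of_real t0) \<rho>" "inj_on \<phi> (ball (of_real t0) \<rho>)"
      "\<forall>t\<in>{t0 - \<rho><..<t0 + \<rho>}. \<phi> (of_real t) = \<gamma> t"
    by (rule conformal_extension_if_inverse_series[OF t0 c \<gamma>_series d inverse_series \<phi>_def])
  have "complex_of_real ` {t0 - \<rho><..<t0 + \<rho>} \<subseteq> ball (of_real t0) \<rho>"
    by (auto simp: dist_norm abs_less_iff simp flip: of_real_diff)
  moreover have "{t0 - \<rho><..<t0 + \<rho>} \<subseteq> {0..1}"
    using \<rho>(2) by auto
  ultimately show ?thesis
    using \<rho>(1) \<phi> open_ball by blast
qed

end
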